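(* An infinite set $S\subset\mathbb N$ is superficial if and only if $\mathbb N$ can be partitioned into three pairwise disjoint sets $\mathbb A,\mathbb B,\mathbb C$ such that: (i) $\mathbb A$ (possibly empty) has natural density zero; (ii) $\mathbb B$ is either empty or a union of infinitely many intervals of consecutive integers whose lengths tend to infinity, and $\mathbb B\subset S$; (iii) $\mathbb C$ is either empty or a union of infinitely many intervals of consecutive integers whose lengths tend to infinity, and $\mathbb C\cap S=\emptyset$.
   Context: For $S\subset\mathbb N$ let $y=\mathbbm 1_S\in\{0,1\}^{\mathbb N}$. For a point $z$ of a shift space $\Lambda^{\mathbb N}$ with shift $\sigma$, let $A_n(z)=\frac1n\sum_{i=0}^{n-1}\delta_{\sigma^i z}$; a shift-invariant measure $\nu$ is quasi-generated by $z$ if it is a weak-* accumulation point of $(A_n(z))_n$, and $\mathcal M_z$ denotes the set of all measures quasi-generated by $z$. An infinite set $S\subset\mathbb N$ is called superficial if $\mathcal M_y\subset\mathrm{conv}\{\delta_{\bar0},\delta_{\bar1}\}$, where $\delta_{\bar0},\delta_{\bar1}$ are the point masses at the constant sequences $(0,0,\dots)$ and $(1,1,\dots)$. *)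

theory Defs
  imports "HOL-Probability.Probability"
begin

text \<open>The space \<open>nat \<Rightarrow> bool\<close> carries the product topology of the discrete space bool,
  i.e. it is the compact metrizable space {0,1}^N, with True read as 1 and False as 0.\<close>

definition shift :: "(nat \<Rightarrow> 'a) \<Rightarrow> nat \<Rightarrow> 'a" where
  "shift z = (\<lambda>i. z (Suc i))"

text \<open>Integral of f against the empirical measure A_n(z) = (1/n) sum_{i<n} delta_{shift^i z}.\<close>

definition empirical_avg :: "(nat \<Rightarrow> 'a) \<Rightarrow> nat \<Rightarrow> ((nat \<Rightarrow> 'a) \<Rightarrow> real) \<Rightarrow> real" where
  "empirical_avg z n f = (1 / real n) * (\<Sum>i<n. f ((shift ^^ i) z))"

text \<open>A shift-invariant Borel probability measure nu is quasi-generated by z if it is a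
  weak-* accumulation point of the sequence A_n(z), i.e. the limit (in the weak-* topology,
  tested against all continuous real functions) of a subsequence A_{r k}(z).\<close>

definition quasi_generated ::
    "(nat \<Rightarrow> 'a::topological_space) \<Rightarrow> (nat \<Rightarrow> 'a) measure \<Rightarrow> bool" where
  "quasi_generated z \<nu> \<longleftrightarrow>
     prob_space \<nu> \<and> sets \<nu> = sets borel \<and>
     (\<forall>A\<in>sets \<nu>. emeasure \<nu> (shift -` A \<inter> space \<nu>) = emeasure \<nu> A) \<and>
     (\<exists>r::nat \<Rightarrow> nat. strict_mono r \<and>
        (\<forall>f::(nat \<Rightarrow> 'a) \<Rightarrow> real. continuous_on UNIV f \<longrightarrow>
           (\<lambda>k. empirical_avg z (r k) f) \<longlonglongrightarrow> integral\<^sup>L \<nu> f))"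

definition quasi_generated_set :: "(nat \<Rightarrow> 'a::topological_space) \<Rightarrow> (nat \<Rightarrow> 'a) measure set" where
  "quasi_generated_set z = {\<nu>. quasi_generated z \<nu>}"

definition ind_seq :: "nat set \<Rightarrow> nat \<Rightarrow> bool" where
  "ind_seq S = (\<lambda>i. i \<in> S)"

definition in_conv_deltas :: "(nat \<Rightarrow> bool) measure \<Rightarrow> bool" where
  "in_conv_deltas \<nu> \<longleftrightarrow> sets \<nu> = sets borel \<and>
     (\<exists>p::real. 0 \<le> p \<and> p \<le> 1 \<and>
        (\<forall>A\<in>sets \<nu>. emeasure \<nu> A =
            ennreal (p * indicator A (\<lambda>_. False) + (1 - p) * indicator A (\<lambda>_. True))))"

definition superficial :: "nat set \<Rightarrow> bool" where
  "superficial S \<longleftrightarrow> infinite S \<and>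
     (\<forall>\<nu>\<in>quasi_generated_set (ind_seq S). in_conv_deltas \<nu>)"

definition density_zero :: "nat set \<Rightarrow> bool" where
  "density_zero A \<longleftrightarrow> (\<lambda>n. real (card (A \<inter> {..<n})) / real n) \<longlonglongrightarrow> 0"

text \<open>B is a union of infinitely many intervals of consecutive integers [a_k, b_k)
  whose lengths tend to infinity (lengths tending to infinity forces infinitely many
  distinct intervals).\<close>
definition union_long_intervals :: "nat set \<Rightarrow> bool" where
  "union_long_intervals B \<longleftrightarrow>
     (\<exists>a b :: nat \<Rightarrow> nat. B = (\<Union>k. {a k..<b k}) \<and>
        filterlim (\<lambda>k. b k - a k) at_top sequentially)"

end

theory Submission
  imports Defs "HOL-Library.Infinite_Set"
begin

text \<open>Let \<open>y = 1\<^sub>S\<close>. A measure quasi-generated by \<open>y\<close> lies in the convex hull of the two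
  fixed points exactly when it gives no mass to the clopen sets of sequences that are not
  constant on their first \<open>L\<close> coordinates. Testing the empirical measures against these sets, and
  using that weak-* limit points exist along every subsequence, \<open>S\<close> is superficial iff for every
  \<open>L\<close> the set of \<open>i\<close> at which \<open>y\<close> is not constant on \<open>[i, i + L)\<close> has density zero.
  Limit points are obtained by embedding \<open>{0,1}\<^sup>\<nat>\<close> into the reals with base-4 digits in
  \<open>{0, 2}\<close> and applying Helly's selection theorem.

  The density condition is equivalent to the partition. Given the partition, a nonconstant
  window meets \<open>A\<close> or one of the boundary points between \<open>B\<close> and \<open>C\<close>, and boundary points
  between long intervals are sparse. Conversely, choosing window lengths \<open>l n \<rightarrow> \<infinity>\<close> slowly
  enough, the points lying in no constant window of length \<open>l j\<close> starting at some \<open>j\<close> form a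
  set of density zero, and the remaining points split into long runs inside and outside \<open>S\<close>.\<close>

section \<open>The sequence space\<close>

instance bool :: second_countable_topology
proof
  show "\<exists>B::bool set set. countable B \<and> open = generate_topology B"
  proof (intro exI[of _ UNIV] conjI)
    show "open = generate_topology (UNIV :: bool set set)"
    proof (rule ext, rule iffI)
      fix x :: "bool set"
      assume "open x"
      then show "generate_topology UNIV x" by (intro generate_topology.Basis) simp
    next
      fix x :: "bool set"
      show "generate_topology UNIV x \<Longrightarrow> open x" by (rule discrete_topology_class.open_discrete)
    qed
  qed simp
qed

lemma funpow_shift: "(shift ^^ i) z = (\<lambda>j. z (i + j))"
  by (induction i arbitrary: z) (auto simp: shift_def)

lemma continuous_on_shift: "continuous_on UNIV (shift :: (nat \<Rightarrow> 'a::topological_space) \<Rightarrow> _)"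
  unfolding shift_def
  by (intro continuous_on_coordinatewise_then_product continuous_on_product_coordinates)

lemma compact_UNIV_bool_seq: "compact (UNIV :: (nat \<Rightarrow> bool) set)"
proof -
  have "compact_space (product_topology (\<lambda>i::nat. (euclidean :: bool topology)) UNIV)"
    by (subst compact_space_product_topology)
       (auto simp: compact_space_def intro!: finite_imp_compact)
  then show ?thesis by (simp add: euclidean_product_topology compact_space_def)
qed

lemma bounded_continuous_on_bool_seq:
  fixes f :: "(nat \<Rightarrow> bool) \<Rightarrow> real"
  assumes "continuous_on UNIV f"
  obtains B where "B \<ge> 0" "\<And>x. \<bar>f x\<bar> \<le> B"
proof -
  have "bounded (range f)"
    by (intro compact_imp_bounded compact_continuous_image assms compact_UNIV_bool_seq)
  then obtain B where "\<And>x. \<bar>f x\<bar> \<le> B" by (auto simp: bounded_iff)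
  moreover from this have "B \<ge> 0" by (meson abs_ge_zero order.trans)
  ultimately show ?thesis using that by blast
qed

lemma continuous_on_if_depends_on_prefix:
  fixes h :: "(nat \<Rightarrow> bool) \<Rightarrow> 'b::topological_space"
  assumes "\<And>x x'. \<forall>i<n. x i = x' i \<Longrightarrow> h x = h x'"
  shows "continuous_on UNIV h"
proof -
  have cylinder_open: "open {x'. \<forall>i\<in>{..<n}. x' (id i) \<in> {x i}}" for x :: "nat \<Rightarrow> bool"
    by (intro product_topology_basis' discrete_topology_class.open_discrete) auto
  show ?thesis
  proof (subst continuous_on_open_vimage[OF open_UNIV], intro allI impI)
    fix V :: "'b set"
    have "h -` V \<inter> UNIV = (\<Union>x\<in>h -` V. {x'. \<forall>i\<in>{..<n}. x' (id i) \<in> {x i}})"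
      using assms by auto
    moreover have "open (\<Union>x\<in>h -` V. {x'. \<forall>i\<in>{..<n}. x' (id i) \<in> {x i}})"
      by (intro open_UN ballI cylinder_open)
    ultimately show "open (h -` V \<inter> UNIV)" by simp
  qed
qed

lemma continuous_on_indicator_if_depends_on_prefix:
  assumes "\<And>x x'. \<forall>i<n. x i = x' i \<Longrightarrow> x \<in> X \<longleftrightarrow> x' \<in> X"
  shows "continuous_on UNIV (indicator X :: (nat \<Rightarrow> bool) \<Rightarrow> real)"
  by (rule continuous_on_if_depends_on_prefix[of n]) (metis assms indicator_simps)

lemma borel_if_depends_on_prefix:
  assumes "\<And>x x'. \<forall>i<n. x i = x' i \<Longrightarrow> x \<in> X \<longleftrightarrow> x' \<in> X"
  shows "X \<in> sets (borel :: (nat \<Rightarrow> bool) measure)"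
proof -
  have "open ((indicator X :: (nat \<Rightarrow> bool) \<Rightarrow> real) -` {0<..} \<inter> UNIV)"
    using continuous_on_indicator_if_depends_on_prefix[OF assms]
      continuous_on_open_vimage[OF open_UNIV] open_greaterThan by blast
  moreover have "(indicator X :: (nat \<Rightarrow> bool) \<Rightarrow> real) -` {0<..} \<inter> UNIV = X"
    by (auto simp: indicator_def)
  ultimately show ?thesis by (simp add: borel_open)
qed

section \<open>A Cantor-type embedding into the reals\<close>

text \<open>Base-4 digits are restricted to \<open>{0, 2}\<close> so that the inverse can be read off digit by
  digit: the unused digits leave gaps, and no carries occur.\<close>

definition cantor_embed :: "(nat \<Rightarrow> bool) \<Rightarrow> real" where
  "cantor_embed x = (\<Sum>i. (if x i then 2 else 0) * (1/4) ^ Suc i)"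

definition cantor_digits :: "real \<Rightarrow> nat \<Rightarrow> bool" where
  "cantor_digits t = (\<lambda>i. \<lfloor>t * 4 ^ Suc i\<rfloor> mod 4 = 2)"

lemma sums_cantor_majorant: "(\<lambda>i. 2 * (1/4::real) ^ Suc i) sums (2/3)"
proof -
  have "(\<lambda>i. (1/4::real) ^ i) sums (1 / (1 - 1/4))" by (rule geometric_sums) simp
  then have "(\<lambda>i. (1/2) * (1/4::real) ^ i) sums ((1/2) * (1 / (1 - 1/4)))" by (rule sums_mult)
  then show ?thesis by simp
qed

lemma summable_cantor_series: "summable (\<lambda>i. (if x i then 2 else 0) * (1/4::real) ^ Suc i)"
  by (rule summable_comparison_test'[OF sums_summable[OF sums_cantor_majorant]]) auto

lemma cantor_embed_nonneg: "0 \<le> cantor_embed x"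
  unfolding cantor_embed_def by (intro suminf_nonneg summable_cantor_series) auto

lemma cantor_embed_le: "cantor_embed x \<le> 2/3"
proof -
  have "cantor_embed x \<le> (\<Sum>i. 2 * (1/4::real) ^ Suc i)"
    unfolding cantor_embed_def
    by (intro suminf_le summable_cantor_series sums_summable[OF sums_cantor_majorant]) auto
  then show ?thesis using sums_unique[OF sums_cantor_majorant] by simp
qed

lemma cantor_embed_shift:
  "4 * cantor_embed x = (if x 0 then 2 else 0) + cantor_embed (shift x)"
proof -
  have "cantor_embed x = (if x 0 then 2 else 0) * (1/4)
      + (\<Sum>i. (1/4) * ((if shift x i then 2 else 0) * (1/4::real) ^ Suc i))"
    unfolding cantor_embed_def using suminf_split_head[OF summable_cantor_series[of x]]
    by (simp add: shift_def mult_ac)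
  also have "(\<Sum>i. (1/4) * ((if shift x i then 2 else 0) * (1/4::real) ^ Suc i))
      = (1/4) * cantor_embed (shift x)"
    unfolding cantor_embed_def by (rule suminf_mult[OF summable_cantor_series])
  finally show ?thesis by simp
qed

lemma cantor_embed_digit: "\<lfloor>cantor_embed x * 4 ^ Suc i\<rfloor> mod 4 = (if x i then 2 else 0)"
proof (induction i arbitrary: x)
  case 0
  have "0 \<le> cantor_embed (shift x)" "cantor_embed (shift x) < 1"
    using cantor_embed_nonneg cantor_embed_le[of "shift x"] by auto
  then have "\<lfloor>cantor_embed x * 4\<rfloor> = (if x 0 then 2 else 0)"
    using cantor_embed_shift[of x] by (auto simp: floor_eq_iff)
  then show ?case by simp
next
  case (Suc i)
  define k :: int where "k = (if x 0 then 2 else 0) * 4 ^ Suc i"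
  have "cantor_embed x * 4 ^ Suc (Suc i) = (4 * cantor_embed x) * 4 ^ Suc i"
    by (simp only: power_Suc mult_ac)
  also have "\<dots> = cantor_embed (shift x) * 4 ^ Suc i + of_int k"
    unfolding cantor_embed_shift k_def by (simp add: distrib_right)
  finally have "\<lfloor>cantor_embed x * 4 ^ Suc (Suc i)\<rfloor> = \<lfloor>cantor_embed (shift x) * 4 ^ Suc i\<rfloor> + k"
    by simp
  moreover have "k mod 4 = 0" unfolding k_def by simp
  ultimately have "\<lfloor>cantor_embed x * 4 ^ Suc (Suc i)\<rfloor> mod 4
      = \<lfloor>cantor_embed (shift x) * 4 ^ Suc i\<rfloor> mod 4"
    by (simp add: mod_add_right_eq[symmetric])
  then show ?case using Suc.IH[of "shift x"] by (simp add: shift_def)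
qed

lemma cantor_digits_embed: "cantor_digits (cantor_embed x) = x"
  unfolding cantor_digits_def using cantor_embed_digit by (force simp: fun_eq_iff)

lemma continuous_on_cantor_embed: "continuous_on UNIV cantor_embed"
proof -
  have "uniform_limit UNIV (\<lambda>n x. \<Sum>i<n. (if x i then 2 else 0) * (1/4::real) ^ Suc i)
      cantor_embed sequentially"
    unfolding cantor_embed_def
    by (rule Weierstrass_m_test[OF _ sums_summable[OF sums_cantor_majorant]]) auto
  moreover have "continuous_on UNIV (\<lambda>x::nat\<Rightarrow>bool. (if x i then 2 else 0) :: real)" for i
    using continuous_on_compose[OF continuous_on_product_coordinates[of i]
        Topological_Spaces.continuous_on_discrete[of _ "\<lambda>b. if b then 2 else (0::real)"]]
    by (simp add: o_def)
  then have "continuous_on UNIV (\<lambda>x. \<Sum>i<n. (if x i then 2 else 0) * (1/4::real) ^ Suc i)" for n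
    by (intro continuous_intros)
  ultimately show ?thesis by (intro uniform_limit_theorem) auto
qed

lemma measurable_cantor_digits: "cantor_digits \<in> borel_measurable borel"
proof (rule measurable_coordinatewise_then_product)
  fix i
  have "(\<lambda>t::real. \<lfloor>t * 4 ^ Suc i\<rfloor> mod 4) \<in> measurable borel (count_space UNIV)"
    by (rule measurable_compose[OF measurable_compose[OF _ measurable_real_floor]]) simp_all
  then have "Measurable.pred borel (\<lambda>t::real. \<lfloor>t * 4 ^ Suc i\<rfloor> mod 4 = 2)"
    by (rule pred_count_space_const1)
  then show "(\<lambda>t. cantor_digits t i) \<in> borel_measurable borel"
    unfolding cantor_digits_def Measurable.pred_def
    by (subst measurable_cong_sets[OF refl sets_borel_eq_count_space]) simp
qed

section \<open>Limits of empirical measures\<close>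

lemma tendsto_0_if_subseq_subseq:
  fixes a :: "nat \<Rightarrow> real"
  assumes nonneg: "\<And>n. 0 \<le> a n"
    and subseq: "\<And>r0 :: nat \<Rightarrow> nat. strict_mono r0 \<Longrightarrow>
      \<exists>r :: nat \<Rightarrow> nat. strict_mono r \<and> (\<lambda>k. a (r0 (r k))) \<longlonglongrightarrow> 0"
  shows "a \<longlonglongrightarrow> 0"
proof (rule order_tendstoI)
  fix e :: real
  assume "e < 0"
  then show "\<forall>\<^sub>F n in sequentially. e < a n"
    using nonneg by (intro always_eventually allI) (auto intro: less_le_trans)
next
  fix e :: real
  assume e: "0 < e"
  show "\<forall>\<^sub>F n in sequentially. a n < e"
  proof (rule ccontr)
    assume "\<not> (\<forall>\<^sub>F n in sequentially. a n < e)"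
    have inf: "infinite {n. e \<le> a n}"
    proof
      assume "finite {n. e \<le> a n}"
      then obtain k where "{n. e \<le> a n} \<subseteq> {..<k}" using finite_nat_bounded by blast
      then have "\<forall>n\<ge>k. a n < e" by (auto simp: not_le[symmetric])
      with \<open>\<not> (\<forall>\<^sub>F n in sequentially. a n < e)\<close> show False
        unfolding eventually_sequentially by blast
    qed
    define r0 where "r0 = enumerate {n. e \<le> a n}"
    have "strict_mono r0" unfolding r0_def by (rule strict_mono_enumerate[OF inf])
    then obtain r where "(\<lambda>k. a (r0 (r k))) \<longlonglongrightarrow> 0" using subseq by meson
    moreover have "e \<le> a (r0 (r k))" for k
      using enumerate_in_set[OF inf] unfolding r0_def by blast
    ultimately have "e \<le> 0" by (intro LIMSEQ_le_const) auto
    with e show False by simp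
  qed
qed

lemma empirical_avg_shift_diff:
  "empirical_avg y n (\<lambda>z. f (shift z)) - empirical_avg y n f = (f ((shift ^^ n) y) - f y) / real n"
proof -
  have "(\<Sum>i<n. f (shift ((shift ^^ i) y))) - (\<Sum>i<n. f ((shift ^^ i) y))
      = (\<Sum>i<n. f ((shift ^^ Suc i) y) - f ((shift ^^ i) y))"
    by (simp add: sum_subtractf)
  also have "\<dots> = f ((shift ^^ n) y) - f y" by (subst sum_lessThan_telescope) simp
  finally have telescope: "(\<Sum>i<n. f (shift ((shift ^^ i) y))) - (\<Sum>i<n. f ((shift ^^ i) y))
      = f ((shift ^^ n) y) - f y" .
  have "empirical_avg y n (\<lambda>z. f (shift z)) - empirical_avg y n f
      = ((\<Sum>i<n. f (shift ((shift ^^ i) y))) - (\<Sum>i<n. f ((shift ^^ i) y))) / real n"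
    by (simp add: empirical_avg_def diff_divide_distrib)
  then show ?thesis unfolding telescope .
qed

lemma empirical_avg_shift_diff_tendsto_0:
  fixes f :: "(nat \<Rightarrow> bool) \<Rightarrow> real"
  assumes "continuous_on UNIV f"
  shows "(\<lambda>n. empirical_avg y n (\<lambda>z. f (shift z)) - empirical_avg y n f) \<longlonglongrightarrow> 0"
proof -
  obtain B where B: "\<And>x. \<bar>f x\<bar> \<le> B" using bounded_continuous_on_bool_seq[OF assms] by blast
  have "(\<lambda>n. (2 * B) * (1 / real n)) \<longlonglongrightarrow> (2 * B) * 0"
    by (intro tendsto_mult tendsto_const lim_1_over_n)
  then have lim: "(\<lambda>n. 2 * B / real n) \<longlonglongrightarrow> 0" by simp
  show ?thesis unfolding empirical_avg_shift_diff
  proof (rule Lim_null_comparison[OF _ lim], intro always_eventually allI)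
    fix n
    have "\<bar>f ((shift ^^ n) y) - f y\<bar> \<le> 2 * B" using B[of "(shift ^^ n) y"] B[of y] by linarith
    then show "norm ((f ((shift ^^ n) y) - f y) / real n) \<le> 2 * B / real n"
      by (simp add: divide_right_mono)
  qed
qed

text \<open>Cylinder sets have continuous indicators, and a finite measure on the product
  \<open>\<sigma>\<close>-algebra is determined by its values on cylinders.\<close>

lemma shift_invariant_if_integral_shift:
  fixes \<nu> :: "(nat \<Rightarrow> bool) measure"
  assumes "prob_space \<nu>" and sets: "sets \<nu> = sets borel"
    and integral_shift: "\<And>f :: (nat \<Rightarrow> bool) \<Rightarrow> real.
      continuous_on UNIV f \<Longrightarrow> integral\<^sup>L \<nu> (\<lambda>z. f (shift z)) = integral\<^sup>L \<nu> f"
    and A: "A \<in> sets \<nu>"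
  shows "emeasure \<nu> (shift -` A \<inter> space \<nu>) = emeasure \<nu> A"
proof -
  interpret prob_space \<nu> by fact
  have space: "space \<nu> = UNIV" using sets_eq_imp_space_eq[OF sets] by simp
  have sets_PiM: "sets \<nu> = sets (Pi\<^sub>M UNIV (\<lambda>_::nat. borel :: bool measure))"
    using sets by (simp add: sets_PiM_equal_borel)
  have shift_meas: "shift \<in> measurable \<nu> \<nu>"
    using borel_measurable_continuous_onI[OF continuous_on_shift]
    by (simp add: measurable_cong_sets[OF sets sets])
  have "distr \<nu> \<nu> shift = \<nu>"
  proof (rule measure_eqI_PiM_infinite[where I=UNIV and M="\<lambda>_. borel"])
    show "sets (distr \<nu> \<nu> shift) = sets (Pi\<^sub>M UNIV (\<lambda>_. borel))" "sets \<nu> = sets (Pi\<^sub>M UNIV (\<lambda>_. borel))"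
      using sets_PiM by simp_all
    show "finite_measure (distr \<nu> \<nu> shift)"
      by (rule prob_space.finite_measure[OF prob_space_distr[OF shift_meas]])
  next
    fix A :: "nat \<Rightarrow> bool set" and J :: "nat set"
    assume J: "finite J" "J \<subseteq> UNIV" "\<And>i. i \<in> J \<Longrightarrow> A i \<in> sets borel"
    define Z where "Z = prod_emb UNIV (\<lambda>_. borel) J (Pi\<^sub>E J A)"
    have Z_eq: "Z = {x. \<forall>i\<in>J. x i \<in> A i}"
      unfolding Z_def prod_emb_def by (auto simp: space_PiM PiE_iff)
    have "Z \<in> sets \<nu>"
      unfolding Z_def sets_PiM by (rule sets_PiM_I) (use J in auto)
    obtain n where "\<And>i. i \<in> J \<Longrightarrow> i < n"
      using finite_nat_bounded[OF J(1)] by blast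
    then have "continuous_on UNIV (indicator Z :: (nat \<Rightarrow> bool) \<Rightarrow> real)"
      by (intro continuous_on_indicator_if_depends_on_prefix[of n]) (auto simp: Z_eq)
    then have "integral\<^sup>L \<nu> (\<lambda>z. indicator Z (shift z)) = (integral\<^sup>L \<nu> (indicator Z) :: real)"
      by (rule integral_shift)
    moreover have "(\<lambda>z. indicator Z (shift z) :: real) = indicator (shift -` Z)"
      by (simp add: fun_eq_iff indicator_def)
    ultimately show "emeasure (distr \<nu> \<nu> shift) Z = emeasure \<nu> Z"
      using \<open>Z \<in> sets \<nu>\<close> measurable_sets[OF shift_meas \<open>Z \<in> sets \<nu>\<close>]
      by (simp add: emeasure_distr[OF shift_meas] emeasure_eq_measure space)
  qed
  then show ?thesis using emeasure_distr[OF shift_meas A] by simp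
qed

lemma quasi_generatedI:
  fixes y :: "nat \<Rightarrow> bool"
  assumes "prob_space \<nu>" and sets: "sets \<nu> = sets borel" and "strict_mono r"
    and lim: "\<And>f. continuous_on UNIV f \<Longrightarrow> (\<lambda>k. empirical_avg y (r k) f) \<longlonglongrightarrow> integral\<^sup>L \<nu> f"
  shows "quasi_generated y \<nu>"
proof -
  have "integral\<^sup>L \<nu> (\<lambda>z. f (shift z)) = integral\<^sup>L \<nu> f"
    if f: "continuous_on UNIV f" for f :: "(nat \<Rightarrow> bool) \<Rightarrow> real"
  proof -
    have fs: "continuous_on UNIV (\<lambda>z. f (shift z))"
      by (rule continuous_on_compose2[OF f continuous_on_shift]) auto
    have "(\<lambda>k. empirical_avg y (r k) (\<lambda>z. f (shift z)) - empirical_avg y (r k) f)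
        \<longlonglongrightarrow> integral\<^sup>L \<nu> (\<lambda>z. f (shift z)) - integral\<^sup>L \<nu> f"
      by (intro tendsto_diff lim f fs)
    moreover have "(\<lambda>k. empirical_avg y (r k) (\<lambda>z. f (shift z)) - empirical_avg y (r k) f) \<longlonglongrightarrow> 0"
      using LIMSEQ_subseq_LIMSEQ[OF empirical_avg_shift_diff_tendsto_0[OF f] \<open>strict_mono r\<close>]
      by (simp add: o_def)
    ultimately show ?thesis using LIMSEQ_unique by fastforce
  qed
  then show ?thesis
    using assms shift_invariant_if_integral_shift unfolding quasi_generated_def by blast
qed

text \<open>The image of the empirical measure \<open>A\<^sub>n\<^sub>+\<^sub>1(y)\<close> under the Cantor embedding; the index is
  shifted by one so that the uniform distribution is over a nonempty set.\<close>

definition embedded_empirical :: "(nat \<Rightarrow> bool) \<Rightarrow> nat \<Rightarrow> real measure" where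
  "embedded_empirical y n =
     distr (measure_pmf (pmf_of_set {..<Suc n})) borel (\<lambda>i. cantor_embed ((shift ^^ i) y))"

lemma real_distribution_embedded_empirical: "real_distribution (embedded_empirical y n)"
  unfolding embedded_empirical_def real_distribution_def real_distribution_axioms_def
  by (auto intro!: prob_space.prob_space_distr prob_space_measure_pmf)

lemma integral_embedded_empirical:
  assumes "g \<in> borel_measurable borel"
  shows "integral\<^sup>L (embedded_empirical y n) g = empirical_avg y (Suc n) (\<lambda>z. g (cantor_embed z))"
proof -
  have "integral\<^sup>L (embedded_empirical y n) g
      = integral\<^sup>L (measure_pmf (pmf_of_set {..<Suc n})) (\<lambda>i. g (cantor_embed ((shift ^^ i) y)))"
    unfolding embedded_empirical_def by (rule integral_distr) (auto simp: assms)
  also have "\<dots> = (\<Sum>i<Suc n. g (cantor_embed ((shift ^^ i) y))) / real (Suc n)"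
    by (subst integral_pmf_of_set) auto
  finally show ?thesis by (simp add: empirical_avg_def)
qed

lemma tight_embedded_empirical: "tight (embedded_empirical y)"
  unfolding tight_def
proof (intro conjI allI impI real_distribution_embedded_empirical)
  fix e :: real
  assume "e > 0"
  have "measure (embedded_empirical y n) {-1<..1} = 1" for n
  proof -
    interpret prob_space "measure_pmf (pmf_of_set {..<Suc n})" by (rule prob_space_measure_pmf)
    have "-1 < cantor_embed z \<and> cantor_embed z \<le> 1" for z
      using cantor_embed_nonneg[of z] cantor_embed_le[of z] by linarith
    then have "(\<lambda>i. cantor_embed ((shift ^^ i) y)) -` {-1<..1} = UNIV" by auto
    then show ?thesis
      unfolding embedded_empirical_def by (subst measure_distr) (auto simp: measure_pmf.prob_space)
  qed
  with \<open>e > 0\<close> show "\<exists>a b::real. a < b \<and> (\<forall>n. 1 - e < measure (embedded_empirical y n) {a<..b})"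
    by (intro exI[of _ "-1"] exI[of _ 1]) auto
qed

lemma empirical_weak_limit_subseq:
  fixes y :: "nat \<Rightarrow> bool" and r0 :: "nat \<Rightarrow> nat"
  assumes r0: "strict_mono r0"
  obtains r M where "strict_mono r" "real_distribution M"
    "\<And>g B. continuous_on UNIV g \<Longrightarrow> (\<And>t. \<bar>g t\<bar> \<le> B) \<Longrightarrow>
       (\<lambda>k. empirical_avg y (r0 (r k)) (\<lambda>z. g (cantor_embed z))) \<longlonglongrightarrow> integral\<^sup>L M g"
proof -
  define s where "s k = r0 (Suc k) - 1" for k
  have r0_Suc: "r0 (Suc k) = Suc (s k)" for k
    using seq_suble[OF r0, of "Suc k"] unfolding s_def by simp
  have "strict_mono s"
    using r0 unfolding strict_mono_Suc_iff by (metis Suc_less_SucD r0_Suc)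
  then obtain r M where r: "strict_mono r" and M: "real_distribution M"
    and weak: "weak_conv_m (embedded_empirical y \<circ> s \<circ> r) M"
    using tight_imp_convergent_subsubsequence[OF tight_embedded_empirical] by blast
  show ?thesis
  proof (rule that[of "Suc \<circ> r" M])
    show "strict_mono (Suc \<circ> r)" using r by (simp add: strict_mono_def)
    show "real_distribution M" by fact
  next
    fix g :: "real \<Rightarrow> real" and B
    assume g: "continuous_on UNIV g" and B: "\<And>t. \<bar>g t\<bar> \<le> B"
    have "(\<lambda>k. integral\<^sup>L ((embedded_empirical y \<circ> s \<circ> r) k) g) \<longlonglongrightarrow> integral\<^sup>L M g"
      by (rule weak_conv_imp_integral_bdd_continuous_conv[OF _ M weak, where B=B])
         (use real_distribution_embedded_empirical g B in
           \<open>auto simp: continuous_on_eq_continuous_at[OF open_UNIV]\<close>)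
    then show "(\<lambda>k. empirical_avg y (r0 ((Suc \<circ> r) k)) (\<lambda>z. g (cantor_embed z))) \<longlonglongrightarrow> integral\<^sup>L M g"
      using integral_embedded_empirical[OF borel_measurable_continuous_onI[OF g]]
      by (simp add: r0_Suc)
  qed
qed

text \<open>Test against \<open>min 1 (infdist t K)\<close>, which vanishes on the compact set \<open>K = range cantor_embed\<close>.\<close>

lemma AE_in_range_cantor_embed:
  fixes y :: "nat \<Rightarrow> bool" and n :: "nat \<Rightarrow> nat" and M :: "real measure"
  assumes M: "real_distribution M"
    and lim: "\<And>g B. continuous_on UNIV g \<Longrightarrow> (\<And>t. \<bar>g t\<bar> \<le> B) \<Longrightarrow>
       (\<lambda>k. empirical_avg y (n k) (\<lambda>z. g (cantor_embed z))) \<longlonglongrightarrow> integral\<^sup>L M g"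
  shows "AE t in M. t \<in> range cantor_embed"
proof -
  interpret M: real_distribution M by (fact M)
  define K where "K = range cantor_embed"
  have "compact K"
    unfolding K_def by (rule compact_continuous_image[OF continuous_on_cantor_embed compact_UNIV_bool_seq])
  then have "closed K" by (rule compact_imp_closed)
  define g where "g t = min 1 (infdist t K)" for t
  have g_cont: "continuous_on UNIV g" unfolding g_def by (intro continuous_intros)
  have g_bound: "\<bar>g t\<bar> \<le> 1" for t unfolding g_def using infdist_nonneg[of t K] by auto
  have "(\<lambda>k. empirical_avg y (n k) (\<lambda>z. g (cantor_embed z))) \<longlonglongrightarrow> integral\<^sup>L M g"
    by (rule lim[OF g_cont g_bound])
  moreover have "empirical_avg y m (\<lambda>z. g (cantor_embed z)) = 0" for m
    by (simp add: empirical_avg_def g_def K_def)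
  ultimately have "(\<lambda>k. 0 :: real) \<longlonglongrightarrow> integral\<^sup>L M g" by simp
  then have "integral\<^sup>L M g = 0" using LIMSEQ_unique[OF tendsto_const] by metis
  moreover have g_meas: "g \<in> borel_measurable M"
    using borel_measurable_continuous_onI[OF g_cont] by simp
  moreover have "integrable M g"
    by (rule M.integrable_const_bound[where B=1]) (use g_bound g_meas in auto)
  ultimately have "AE t in M. g t = 0"
    by (subst integral_nonneg_eq_0_iff_AE[symmetric]) (auto simp: g_def infdist_nonneg)
  then show ?thesis
  proof (rule AE_mp, intro AE_I2 impI)
    fix t
    assume "g t = 0"
    then have "infdist t K = 0" unfolding g_def by (auto simp: min_def split: if_splits)
    then show "t \<in> range cantor_embed"
      using in_closure_iff_infdist_zero[of K t] \<open>closed K\<close> unfolding K_def by auto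
  qed
qed

text \<open>Pulling \<open>M\<close> back along the Borel inverse \<open>cantor_digits\<close>: a continuous \<open>f\<close> on sequences
  becomes the continuous function \<open>f \<circ> cantor_digits\<close> on the compact range of the embedding,
  which Tietze extends to a bounded continuous function on the reals.\<close>

lemma empirical_avg_tendsto_pullback:
  fixes y :: "nat \<Rightarrow> bool" and n :: "nat \<Rightarrow> nat" and M :: "real measure"
  assumes M: "real_distribution M"
    and lim: "\<And>g B. continuous_on UNIV g \<Longrightarrow> (\<And>t. \<bar>g t\<bar> \<le> B) \<Longrightarrow>
       (\<lambda>k. empirical_avg y (n k) (\<lambda>z. g (cantor_embed z))) \<longlonglongrightarrow> integral\<^sup>L M g"
    and f: "continuous_on UNIV f"
  shows "(\<lambda>k. empirical_avg y (n k) f) \<longlonglongrightarrow> integral\<^sup>L (distr M borel cantor_digits) f"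
proof -
  interpret M: real_distribution M by (fact M)
  define K where "K = range cantor_embed"
  obtain B where B: "B \<ge> 0" "\<And>x. \<bar>f x\<bar> \<le> B" using bounded_continuous_on_bool_seq[OF f] by blast
  have "continuous_on K cantor_digits"
    unfolding K_def
    by (rule continuous_on_inv[OF continuous_on_cantor_embed compact_UNIV_bool_seq])
       (simp add: cantor_digits_embed)
  then have cont: "continuous_on K (\<lambda>t. f (cantor_digits t))"
    by (rule continuous_on_compose2[OF f]) auto
  have "closed K"
    unfolding K_def
    by (intro compact_imp_closed compact_continuous_image continuous_on_cantor_embed compact_UNIV_bool_seq)
  then have closedin: "closedin (top_of_set UNIV) K" by simp
  have bound: "\<And>t. t \<in> K \<Longrightarrow> norm (f (cantor_digits t)) \<le> B" using B(2) by simp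
  obtain g where g: "continuous_on UNIV g" "\<And>t. t \<in> K \<Longrightarrow> g t = f (cantor_digits t)"
      "\<And>t. t \<in> UNIV \<Longrightarrow> norm (g t) \<le> B"
    using Tietze[OF cont closedin B(1) bound] by blast
  have "(\<lambda>k. empirical_avg y (n k) (\<lambda>z. g (cantor_embed z))) \<longlonglongrightarrow> integral\<^sup>L M g"
    by (rule lim[OF g(1)]) (use g(3) in auto)
  moreover have "(\<lambda>z. g (cantor_embed z)) = f"
    using g(2) by (auto simp: K_def cantor_digits_embed fun_eq_iff)
  moreover have "integral\<^sup>L (distr M borel cantor_digits) f = integral\<^sup>L M g"
  proof -
    have f_meas: "f \<in> borel_measurable borel" by (rule borel_measurable_continuous_onI[OF f])
    have digits_meas: "cantor_digits \<in> measurable M borel"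
      using measurable_cantor_digits by (simp add: measurable_cong_sets[OF M.events_eq_borel refl])
    have "integral\<^sup>L (distr M borel cantor_digits) f = integral\<^sup>L M (\<lambda>t. f (cantor_digits t))"
      by (rule integral_distr[OF digits_meas f_meas])
    also have "\<dots> = integral\<^sup>L M g"
    proof (rule integral_cong_AE)
      show "(\<lambda>t. f (cantor_digits t)) \<in> borel_measurable M"
        using measurable_compose[OF digits_meas f_meas] .
      show "g \<in> borel_measurable M" using borel_measurable_continuous_onI[OF g(1)] by simp
      show "AE t in M. f (cantor_digits t) = g t"
        using AE_in_range_cantor_embed[OF M lim] by (rule AE_mp) (auto simp: g(2) K_def)
    qed
    finally show ?thesis .
  qed
  ultimately show ?thesis by simp
qed

lemma exists_quasi_generated_subseq:
  fixes y :: "nat \<Rightarrow> bool" and r0 :: "nat \<Rightarrow> nat"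
  assumes r0: "strict_mono r0"
  obtains \<nu> r where "strict_mono r" "quasi_generated y \<nu>"
    "\<And>f. continuous_on UNIV f \<Longrightarrow> (\<lambda>k. empirical_avg y (r0 (r k)) f) \<longlonglongrightarrow> integral\<^sup>L \<nu> f"
proof -
  obtain r M where r: "strict_mono r" and M: "real_distribution M"
    and lim: "\<And>g B. continuous_on UNIV g \<Longrightarrow> (\<And>t. \<bar>g t\<bar> \<le> B) \<Longrightarrow>
       (\<lambda>k. empirical_avg y (r0 (r k)) (\<lambda>z. g (cantor_embed z))) \<longlonglongrightarrow> integral\<^sup>L M g"
    using empirical_weak_limit_subseq[OF r0] by blast
  define \<nu> where "\<nu> = distr M borel cantor_digits"
  have lim_\<nu>: "(\<lambda>k. empirical_avg y (r0 (r k)) f) \<longlonglongrightarrow> integral\<^sup>L \<nu> f" if "continuous_on UNIV f" for f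
    unfolding \<nu>_def using empirical_avg_tendsto_pullback[OF M lim that] .
  have "prob_space \<nu>"
    unfolding \<nu>_def using measurable_cantor_digits
    by (intro prob_space.prob_space_distr real_distribution.axioms(1)[OF M])
       (simp add: measurable_cong_sets[OF real_distribution.events_eq_borel[OF M] refl])
  then have "quasi_generated y \<nu>"
  proof (rule quasi_generatedI[OF _ _ strict_mono_o[OF r0 r]])
    show "sets \<nu> = sets borel" by (simp add: \<nu>_def)
    show "(\<lambda>k. empirical_avg y ((r0 \<circ> r) k) f) \<longlonglongrightarrow> integral\<^sup>L \<nu> f"
      if "continuous_on UNIV f" for f
      using lim_\<nu>[OF that] by (simp add: o_def)
  qed
  with r lim_\<nu> show ?thesis using that by blast
qed

section \<open>Superficial sets and nonconstant windows\<close>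

definition nonconstant_prefix :: "nat \<Rightarrow> (nat \<Rightarrow> 'a) set" where
  "nonconstant_prefix L = {x. \<exists>j<L. x j \<noteq> x 0}"

definition nonconstant_windows :: "(nat \<Rightarrow> 'a) \<Rightarrow> nat \<Rightarrow> nat set" where
  "nonconstant_windows y L = {i. \<exists>j<L. y (i + j) \<noteq> y i}"

lemma nonconstant_windows_mono: "L \<le> L' \<Longrightarrow> nonconstant_windows y L \<subseteq> nonconstant_windows y L'"
  unfolding nonconstant_windows_def by (auto intro: less_le_trans)

lemma nonconstant_prefix_depends_on_prefix:
  "\<forall>i<L. x i = x' i \<Longrightarrow> x \<in> nonconstant_prefix L \<longleftrightarrow> x' \<in> nonconstant_prefix L"
  unfolding nonconstant_prefix_def by (cases "L = 0") auto

lemma continuous_on_indicator_nonconstant_prefix: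
  "continuous_on UNIV (indicator (nonconstant_prefix L) :: (nat \<Rightarrow> bool) \<Rightarrow> real)"
  by (rule continuous_on_indicator_if_depends_on_prefix[OF nonconstant_prefix_depends_on_prefix])

lemma borel_nonconstant_prefix: "nonconstant_prefix L \<in> sets (borel :: (nat \<Rightarrow> bool) measure)"
  by (rule borel_if_depends_on_prefix[OF nonconstant_prefix_depends_on_prefix])

lemma empirical_avg_nonconstant_prefix:
  "empirical_avg y n (indicator (nonconstant_prefix L))
     = real (card (nonconstant_windows y L \<inter> {..<n})) / real n"
proof -
  have "(\<Sum>i<n. indicator (nonconstant_prefix L) ((shift ^^ i) y) :: real)
      = (\<Sum>i<n. indicator (nonconstant_windows y L) i)"
    by (rule sum.cong) (auto simp: funpow_shift nonconstant_prefix_def nonconstant_windows_def indicator_def)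
  also have "\<dots> = real (card (nonconstant_windows y L \<inter> {..<n}))"
    by (simp add: indicator_def Int_commute)
  finally show ?thesis unfolding empirical_avg_def by simp
qed

text \<open>If the empirical frequency of nonconstant windows stayed above \<open>e\<close> along a subsequence,
  a measure quasi-generated along a further subsequence would give the clopen set
  \<open>nonconstant_prefix L\<close> mass at least \<open>e\<close>; but a combination of the two fixed points gives it none.\<close>

lemma density_zero_nonconstant_windows_if_superficial:
  assumes "superficial S"
  shows "density_zero (nonconstant_windows (ind_seq S) L)"
  unfolding density_zero_def
proof (rule tendsto_0_if_subseq_subseq)
  fix r0 :: "nat \<Rightarrow> nat"
  assume "strict_mono r0"
  obtain r \<nu> where r: "strict_mono r" and qg: "quasi_generated (ind_seq S) \<nu>"
    and lim: "\<And>f. continuous_on UNIV f \<Longrightarrow>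
      (\<lambda>k. empirical_avg (ind_seq S) (r0 (r k)) f) \<longlonglongrightarrow> integral\<^sup>L \<nu> f"
    using exists_quasi_generated_subseq[OF \<open>strict_mono r0\<close>, where y="ind_seq S"] by metis
  have "in_conv_deltas \<nu>"
    using assms qg unfolding superficial_def quasi_generated_set_def by auto
  then obtain p where sets: "sets \<nu> = sets borel" and
    p: "\<forall>A\<in>sets \<nu>. emeasure \<nu> A = ennreal (p * indicator A (\<lambda>_. False) + (1 - p) * indicator A (\<lambda>_. True))"
    unfolding in_conv_deltas_def by blast
  have "(\<lambda>_. False) \<notin> nonconstant_prefix L" "(\<lambda>_. True) \<notin> nonconstant_prefix L"
    by (auto simp: nonconstant_prefix_def)
  then have "emeasure \<nu> (nonconstant_prefix L) = 0"
    using p borel_nonconstant_prefix[of L] sets by simp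
  moreover have "space \<nu> = UNIV" using sets_eq_imp_space_eq[OF sets] by simp
  ultimately have zero: "integral\<^sup>L \<nu> (indicator (nonconstant_prefix L)) = (0 :: real)"
    by (simp add: measure_def)
  have "(\<lambda>k. real (card (nonconstant_windows (ind_seq S) L \<inter> {..<r0 (r k)})) / real (r0 (r k)))
      \<longlonglongrightarrow> 0"
    using lim[OF continuous_on_indicator_nonconstant_prefix[of L]]
    unfolding empirical_avg_nonconstant_prefix zero .
  with r show "\<exists>r. strict_mono r \<and>
      (\<lambda>k. real (card (nonconstant_windows (ind_seq S) L \<inter> {..<r0 (r k)})) / real (r0 (r k))) \<longlonglongrightarrow> 0"
    by blast
qed simp

lemma UN_nonconstant_prefix: "(\<Union>L. nonconstant_prefix L) = - {(\<lambda>_. False), (\<lambda>_. True)}"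
proof (intro equalityI subsetI)
  fix x :: "nat \<Rightarrow> bool"
  assume "x \<in> - {(\<lambda>_. False), (\<lambda>_. True)}"
  then have "x \<noteq> (\<lambda>_. x 0)" by (cases "x 0") auto
  then obtain j where "x j \<noteq> x 0" by auto
  then show "x \<in> (\<Union>L. nonconstant_prefix L)"
    unfolding nonconstant_prefix_def by blast
qed (auto simp: nonconstant_prefix_def)

lemma in_conv_deltas_if_nonconstant_prefix_null:
  fixes \<nu> :: "(nat \<Rightarrow> bool) measure"
  assumes "prob_space \<nu>" and sets: "sets \<nu> = sets borel"
    and null: "\<And>L. nonconstant_prefix L \<in> null_sets \<nu>"
  shows "in_conv_deltas \<nu>"
proof -
  interpret prob_space \<nu> by fact
  define F :: "nat \<Rightarrow> bool" where "F = (\<lambda>_. False)"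
  define T :: "nat \<Rightarrow> bool" where "T = (\<lambda>_. True)"
  have "F \<noteq> T" unfolding F_def T_def by (simp add: fun_eq_iff)
  have "(\<Union>L. nonconstant_prefix L) = - {F, T}"
    unfolding F_def T_def by (rule UN_nonconstant_prefix)
  moreover have "(\<Union>L. nonconstant_prefix L) \<in> null_sets \<nu>"
    using null by (intro null_sets_UN) auto
  ultimately have null_FT: "- {F, T} \<in> null_sets \<nu>" by simp
  have sets_FT: "{x} \<in> sets \<nu>" for x
  proof -
    have "{x} = (\<Inter>n. {z. \<forall>i<n. z i = x i})" by (auto simp: fun_eq_iff)
    moreover have "{z. \<forall>i<n. z i = x i} \<in> sets \<nu>" for n
      unfolding sets by (rule borel_if_depends_on_prefix[of n]) auto
    ultimately show ?thesis by simp
  qed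
  have measure_eq: "measure \<nu> A = measure \<nu> {F} * indicator A F + measure \<nu> {T} * indicator A T"
    if "A \<in> sets \<nu>" for A
  proof -
    have "measure \<nu> A = measure \<nu> (A - - {F, T})"
      using emeasure_Diff_null_set[OF null_FT that] by (simp add: emeasure_eq_measure)
    also have "A - - {F, T} = (if F \<in> A then {F} else {}) \<union> (if T \<in> A then {T} else {})"
      by auto
    also have "measure \<nu> \<dots> = measure \<nu> {F} * indicator A F + measure \<nu> {T} * indicator A T"
      using finite_measure_Union[of "if F \<in> A then {F} else {}" "if T \<in> A then {T} else {}"]
        sets_FT \<open>F \<noteq> T\<close>
      by (simp add: indicator_def)
    finally show ?thesis .
  qed
  have "measure \<nu> {F} + measure \<nu> {T} = 1"
    using measure_eq[OF sets.top] prob_space unfolding sets_eq_imp_space_eq[OF sets] by simp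
  then show ?thesis unfolding in_conv_deltas_def
  proof (intro conjI sets exI[of _ "measure \<nu> {F}"] ballI)
    fix A
    assume "A \<in> sets \<nu>"
    with \<open>measure \<nu> {F} + measure \<nu> {T} = 1\<close>
    show "emeasure \<nu> A = ennreal (measure \<nu> {F} * indicator A (\<lambda>_. False)
        + (1 - measure \<nu> {F}) * indicator A (\<lambda>_. True))"
      unfolding F_def[symmetric] T_def[symmetric] by (simp add: emeasure_eq_measure measure_eq)
  qed auto
qed

lemma in_conv_deltas_if_density_zero_windows:
  fixes y :: "nat \<Rightarrow> bool"
  assumes dens: "\<And>L. density_zero (nonconstant_windows y L)" and qg: "quasi_generated y \<nu>"
  shows "in_conv_deltas \<nu>"
proof -
  from qg obtain r where "prob_space \<nu>" and sets: "sets \<nu> = sets borel" and r: "strict_mono r"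
    and lim: "\<And>f. continuous_on UNIV f \<Longrightarrow> (\<lambda>k. empirical_avg y (r k) f) \<longlonglongrightarrow> integral\<^sup>L \<nu> f"
    unfolding quasi_generated_def by blast
  interpret prob_space \<nu> by fact
  have "nonconstant_prefix L \<in> null_sets \<nu>" for L
  proof -
    have "(\<lambda>k. empirical_avg y (r k) (indicator (nonconstant_prefix L)))
        \<longlonglongrightarrow> integral\<^sup>L \<nu> (indicator (nonconstant_prefix L))"
      by (rule lim[OF continuous_on_indicator_nonconstant_prefix])
    moreover have "(\<lambda>k. empirical_avg y (r k) (indicator (nonconstant_prefix L))) \<longlonglongrightarrow> 0"
      using LIMSEQ_subseq_LIMSEQ[OF dens[unfolded density_zero_def] r]
      by (simp add: o_def empirical_avg_nonconstant_prefix)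
    ultimately have "integral\<^sup>L \<nu> (indicator (nonconstant_prefix L)) = (0 :: real)"
      by (rule LIMSEQ_unique)
    then have "measure \<nu> (nonconstant_prefix L) = 0"
      using sets_eq_imp_space_eq[OF sets] by simp
    then show ?thesis
      using borel_nonconstant_prefix sets by (simp add: emeasure_eq_measure null_sets_def)
  qed
  then show ?thesis by (rule in_conv_deltas_if_nonconstant_prefix_null[OF prob_space_axioms sets])
qed

theorem superficial_iff_density_zero_windows:
  assumes "infinite S"
  shows "superficial S \<longleftrightarrow> (\<forall>L. density_zero (nonconstant_windows (ind_seq S) L))"
  using assms density_zero_nonconstant_windows_if_superficial in_conv_deltas_if_density_zero_windows
  unfolding superficial_def quasi_generated_set_def by blast

section \<open>Density zero\<close>

lemma density_zero_Un:
  assumes "density_zero A" "density_zero D"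
  shows "density_zero (A \<union> D)"
proof -
  have bound: "\<forall>n. norm (real (card ((A \<union> D) \<inter> {..<n})) / real n)
      \<le> real (card (A \<inter> {..<n})) / real n + real (card (D \<inter> {..<n})) / real n"
  proof
    fix n
    have "card ((A \<union> D) \<inter> {..<n}) \<le> card (A \<inter> {..<n}) + card (D \<inter> {..<n})"
      by (metis Int_Un_distrib2 card_Un_le)
    then show "norm (real (card ((A \<union> D) \<inter> {..<n})) / real n)
        \<le> real (card (A \<inter> {..<n})) / real n + real (card (D \<inter> {..<n})) / real n"
      by (simp add: add_divide_distrib[symmetric] divide_right_mono)
  qed
  have "(\<lambda>n. real (card (A \<inter> {..<n})) / real n + real (card (D \<inter> {..<n})) / real n) \<longlonglongrightarrow> 0"
    using tendsto_add[OF assms[unfolded density_zero_def]] by simp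
  then show ?thesis
    unfolding density_zero_def by (rule Lim_null_comparison[OF always_eventually[OF bound]])
qed

lemma density_zero_finite:
  assumes "finite F"
  shows "density_zero F"
proof -
  have "\<forall>n. norm (real (card (F \<inter> {..<n})) / real n) \<le> real (card F) * (1 / real n)"
    using card_mono[OF assms, of "F \<inter> {..<_}"] by (simp add: divide_right_mono)
  moreover have "(\<lambda>n. real (card F) * (1 / real n)) \<longlonglongrightarrow> 0"
    by (rule tendsto_mult_right_zero[OF lim_1_over_n])
  ultimately show ?thesis
    unfolding density_zero_def by (rule Lim_null_comparison[OF always_eventually])
qed

lemma density_zero_subset: "A \<subseteq> D \<Longrightarrow> density_zero D \<Longrightarrow> density_zero A"
  unfolding density_zero_def
  by (rule Lim_null_comparison[OF always_eventually])
     (auto intro!: divide_right_mono card_mono)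

lemma density_zeroI:
  assumes "\<And>e. e > 0 \<Longrightarrow> \<forall>\<^sub>F n in sequentially. real (card (A \<inter> {..<n})) / real n < e"
  shows "density_zero A"
  unfolding density_zero_def
proof (rule order_tendstoI)
  fix a :: real
  assume "a < 0"
  then show "\<forall>\<^sub>F n in sequentially. a < real (card (A \<inter> {..<n})) / real n"
    by (intro always_eventually allI) (auto intro: less_le_trans[of a 0])
qed (rule assms)

lemma card_near_le:
  "card ({i. \<exists>t<L. i + t \<in> D} \<inter> {..<n}) \<le> L * (card (D \<inter> {..<n}) + L)"
proof -
  have "card ({i. \<exists>t<L. i + t \<in> D} \<inter> {..<n}) \<le> card (\<Union>t<L. {i. i < n \<and> i + t \<in> D})"
    by (rule card_mono) auto
  also have "\<dots> \<le> (\<Sum>t<L. card {i. i < n \<and> i + t \<in> D})" by (rule card_UN_le) simp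
  also have "\<dots> \<le> (\<Sum>t<L. card (D \<inter> {..<n}) + L)"
  proof (rule sum_mono)
    fix t
    assume "t \<in> {..<L}"
    have "card {i. i < n \<and> i + t \<in> D} = card ((\<lambda>i. i + t) ` {i. i < n \<and> i + t \<in> D})"
      by (rule card_image[symmetric]) (simp add: inj_on_def)
    also have "\<dots> \<le> card ((D \<inter> {..<n}) \<union> {n..<n + L})"
      by (rule card_mono) (use \<open>t \<in> {..<L}\<close> in auto)
    also have "\<dots> \<le> card (D \<inter> {..<n}) + card {n..<n + L}" by (rule card_Un_le)
    finally show "card {i. i < n \<and> i + t \<in> D} \<le> card (D \<inter> {..<n}) + L" by simp
  qed
  finally show ?thesis by simp
qed

lemma density_zero_near:
  assumes "density_zero D"
  shows "density_zero {i. \<exists>t<L. i + t \<in> D}"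
proof -
  have "\<forall>n. norm (real (card ({i. \<exists>t<L. i + t \<in> D} \<inter> {..<n})) / real n)
      \<le> real L * (real (card (D \<inter> {..<n})) / real n) + real (L * L) * (1 / real n)"
  proof
    fix n
    have "real (card ({i. \<exists>t<L. i + t \<in> D} \<inter> {..<n})) \<le> real L * real (card (D \<inter> {..<n})) + real (L * L)"
      using card_near_le[of L D n] by (simp add: distrib_left flip: of_nat_mult of_nat_add)
    then show "norm (real (card ({i. \<exists>t<L. i + t \<in> D} \<inter> {..<n})) / real n)
        \<le> real L * (real (card (D \<inter> {..<n})) / real n) + real (L * L) * (1 / real n)"
      by (simp add: divide_right_mono add_divide_distrib[symmetric])
  qed
  moreover have "(\<lambda>n. real L * (real (card (D \<inter> {..<n})) / real n) + real (L * L) * (1 / real n))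
      \<longlonglongrightarrow> real L * 0 + real (L * L) * 0"
    using assms unfolding density_zero_def by (intro tendsto_add tendsto_mult tendsto_const lim_1_over_n)
  then have "(\<lambda>n. real L * (real (card (D \<inter> {..<n})) / real n) + real (L * L) * (1 / real n))
      \<longlonglongrightarrow> 0"
    by simp
  ultimately show ?thesis
    unfolding density_zero_def by (rule Lim_null_comparison[OF always_eventually])
qed

text \<open>\<open>T L\<close> is a threshold beyond which \<open>D L\<close> has relative frequency at most \<open>1 / L\<close>, and
  \<open>l n\<close> is the largest \<open>L \<le> n\<close> whose threshold lies below \<open>n\<close>.\<close>

lemma exists_slow_window_length:
  fixes D :: "nat \<Rightarrow> nat set"
  assumes dens: "\<And>L. density_zero (D L)"
  obtains l :: "nat \<Rightarrow> nat" where "mono l" "\<And>n. 1 \<le> l n" "\<And>n. l n \<le> max 1 n"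
    "filterlim l at_top sequentially" "\<And>n. l n * card (D (l n) \<inter> {..<n}) \<le> n"
proof -
  have "\<exists>T. \<forall>n\<ge>T. L * card (D L \<inter> {..<n}) \<le> n" for L
  proof (cases "L = 0")
    case False
    have "\<forall>\<^sub>F n in sequentially. real (card (D L \<inter> {..<n})) / real n < 1 / real L"
      by (rule order_tendstoD(2)[OF dens[unfolded density_zero_def]]) (use False in simp)
    then obtain N where N: "\<And>n. n \<ge> N \<Longrightarrow> real (card (D L \<inter> {..<n})) / real n < 1 / real L"
      unfolding eventually_sequentially by blast
    have "L * card (D L \<inter> {..<n}) \<le> n" if "max 1 N \<le> n" for n
    proof -
      have "real (card (D L \<inter> {..<n})) * real L < real n"
        using N[of n] that False by (simp add: field_simps)
      then show ?thesis by (simp add: mult.commute flip: of_nat_mult)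
    qed
    then show ?thesis by blast
  qed simp
  then obtain T where T: "\<And>L n. T L \<le> n \<Longrightarrow> L * card (D L \<inter> {..<n}) \<le> n"
    by metis
  define l where "l n = Max (insert 1 {L. L \<le> n \<and> T L \<le> n})" for n
  have fin: "finite (insert 1 {L. L \<le> n \<and> T L \<le> n})" for n by simp
  show ?thesis
  proof (rule that)
    show "mono l"
      unfolding l_def mono_def by (intro allI impI Max_mono[OF _ _ fin]) auto
    show "1 \<le> l n" for n
      unfolding l_def by (rule Max_ge[OF fin]) simp
    show "l n \<le> max 1 n" for n
      unfolding l_def by (rule Max.boundedI[OF fin]) auto
    have "M \<le> l n" if "M \<le> n" "T M \<le> n" for M n
      unfolding l_def by (rule Max_ge[OF fin]) (use that in auto)
    then show "filterlim l at_top sequentially"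
      unfolding filterlim_at_top eventually_sequentially by (meson max.boundedE)
    show "l n * card (D (l n) \<inter> {..<n}) \<le> n" for n
    proof -
      have "l n \<in> insert 1 {L. L \<le> n \<and> T L \<le> n}"
        unfolding l_def by (rule Max_in[OF fin]) simp
      then consider "l n = 1" | "T (l n) \<le> n" by auto
      then show ?thesis
      proof cases
        case 1
        then show ?thesis using card_mono[of "{..<n}" "D 1 \<inter> {..<n}"] by simp
      qed (rule T)
    qed
  qed
qed

section \<open>Long runs and the partition\<close>

text \<open>For infinite \<open>B\<close> this is equivalent to \<open>union_long_intervals\<close>, but it also holds for
  every finite set.\<close>

definition long_interval_cover :: "nat set \<Rightarrow> bool" where
  "long_interval_cover B \<longleftrightarrow>
     (\<forall>M. \<exists>N. \<forall>x\<in>B. N \<le> x \<longrightarrow> (\<exists>a b. a \<le> x \<and> x < b \<and> {a..<b} \<subseteq> B \<and> M \<le> b - a))"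

lemma long_interval_cover_empty: "long_interval_cover {}"
  unfolding long_interval_cover_def by simp

text \<open>The \<open>k\<close>-th element of \<open>B\<close> is covered by the longest interval in \<open>B\<close> around it of length
  at most \<open>k\<close>; these lengths tend to infinity.\<close>

lemma union_long_intervals_if_cover:
  assumes inf: "infinite B" and cover: "long_interval_cover B"
  shows "union_long_intervals B"
proof -
  define e where "e = enumerate B"
  have e_in: "e k \<in> B" for k unfolding e_def by (rule enumerate_in_set[OF inf])
  have e_ge: "k \<le> e k" for k unfolding e_def by (rule seq_suble[OF strict_mono_enumerate[OF inf]])
  have range_e: "range e = B" unfolding e_def by (rule range_enumerate[OF inf])
  define ok where "ok k M \<longleftrightarrow> (\<exists>a b. a \<le> e k \<and> e k < b \<and> {a..<b} \<subseteq> B \<and> M \<le> b - a)" for k M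
  define m where "m k = Max {M. M \<le> k \<and> ok k M}" for k
  have fin: "finite {M. M \<le> k \<and> ok k M}" for k by simp
  have "ok k 0" for k
    unfolding ok_def by (rule exI[of _ "e k"], rule exI[of _ "Suc (e k)"]) (use e_in[of k] in auto)
  then have "m k \<in> {M. M \<le> k \<and> ok k M}" for k
    unfolding m_def by (intro Max_in[OF fin]) auto
  then have "ok k (m k)" for k by simp
  then obtain a b where ab: "\<And>k. a k \<le> e k \<and> e k < b k \<and> {a k..<b k} \<subseteq> B \<and> m k \<le> b k - a k"
    unfolding ok_def by metis
  have m_ge: "M \<le> m k" if "M \<le> k" "ok k M" for k M
    unfolding m_def by (rule Max_ge[OF fin]) (use that in auto)
  show ?thesis
    unfolding union_long_intervals_def
  proof (rule exI[of _ a], rule exI[of _ b], intro conjI)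
    show "B = (\<Union>k. {a k..<b k})"
    proof (rule equalityI)
      show "B \<subseteq> (\<Union>k. {a k..<b k})"
      proof
        fix x
        assume "x \<in> B"
        then obtain k where "x = e k" using range_e by auto
        then show "x \<in> (\<Union>k. {a k..<b k})" using ab[of k] by auto
      qed
      show "(\<Union>k. {a k..<b k}) \<subseteq> B" using ab by blast
    qed
    show "filterlim (\<lambda>k. b k - a k) at_top sequentially"
      unfolding filterlim_at_top eventually_sequentially
    proof
      fix M
      obtain N where N: "\<forall>x\<in>B. N \<le> x \<longrightarrow> (\<exists>a b. a \<le> x \<and> x < b \<and> {a..<b} \<subseteq> B \<and> M \<le> b - a)"
        using cover unfolding long_interval_cover_def by blast
      have "M \<le> b k - a k" if "max M N \<le> k" for k
      proof -
        have "N \<le> e k" using e_ge[of k] that by simp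
        then have "ok k M" using N e_in[of k] unfolding ok_def by blast
        then show ?thesis using m_ge[of M k] ab[of k] that by simp
      qed
      then show "\<exists>K. \<forall>k\<ge>K. M \<le> b k - a k" by blast
    qed
  qed
qed

lemma cover_if_union_long_intervals:
  assumes "union_long_intervals B"
  shows "long_interval_cover B"
  unfolding long_interval_cover_def
proof
  fix M
  obtain a b where B: "B = (\<Union>k. {a k..<b k})" and lim: "filterlim (\<lambda>k. b k - a k) at_top sequentially"
    using assms unfolding union_long_intervals_def by blast
  obtain K where K: "\<And>k. K \<le> k \<Longrightarrow> M \<le> b k - a k"
    using lim unfolding filterlim_at_top eventually_sequentially by blast
  define N where "N = Max (insert 0 (b ` {..<K}))"
  have b_le: "k < K \<Longrightarrow> b k \<le> N" for k unfolding N_def by (intro Max_ge) auto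
  have "\<exists>a' b'. a' \<le> x \<and> x < b' \<and> {a'..<b'} \<subseteq> B \<and> M \<le> b' - a'" if "x \<in> B" "N \<le> x" for x
  proof -
    obtain k where k: "a k \<le> x" "x < b k" using B \<open>x \<in> B\<close> by auto
    have "K \<le> k"
    proof (rule ccontr)
      assume "\<not> K \<le> k"
      then have "b k \<le> N" using b_le by simp
      then show False using k \<open>N \<le> x\<close> by simp
    qed
    moreover have "{a k..<b k} \<subseteq> B" using B by blast
    ultimately show ?thesis using K k by blast
  qed
  then show "\<exists>N. \<forall>x\<in>B. N \<le> x \<longrightarrow> (\<exists>a b. a \<le> x \<and> x < b \<and> {a..<b} \<subseteq> B \<and> M \<le> b - a)"
    by blast
qed

lemma infinite_part_of_cover:
  assumes "long_interval_cover X"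
  obtains X' where "X' \<subseteq> X" "finite (X - X')" "X' = {} \<or> union_long_intervals X'"
proof (cases "finite X")
  case True
  then show ?thesis using that[of "{}"] by simp
next
  case False
  then show ?thesis using that[of X] union_long_intervals_if_cover[OF False assms] by simp
qed

text \<open>With \<open>l\<close> from \<open>exists_slow_window_length\<close>, the points covered by no constant window
  \<open>[j, j + l j)\<close> have density zero, while all others lie in arbitrarily long constant runs.\<close>

definition uncovered_by_constant_runs :: "(nat \<Rightarrow> 'a) \<Rightarrow> (nat \<Rightarrow> nat) \<Rightarrow> nat set" where
  "uncovered_by_constant_runs y l = {i. \<forall>j\<le>i. i < j + l j \<longrightarrow> j \<in> nonconstant_windows y (l j)}"

lemma density_zero_uncovered_by_constant_runs:
  assumes l_mono: "mono l" and l_pos: "\<And>n. 1 \<le> l n" and l_lim: "filterlim l at_top sequentially"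
    and l_card: "\<And>n. l n * card (nonconstant_windows y (l n) \<inter> {..<n}) \<le> n"
  shows "density_zero (uncovered_by_constant_runs y l)"
proof -
  define A where "A = uncovered_by_constant_runs y l"
  have "\<forall>n. norm (real (card (A \<inter> {..<n})) / real n) \<le> 1 * (1 / real (l n))"
  proof
    fix n
    have "A \<inter> {..<n} \<subseteq> nonconstant_windows y (l n) \<inter> {..<n}"
    proof
      fix i
      assume i: "i \<in> A \<inter> {..<n}"
      then have "i \<in> nonconstant_windows y (l i)"
        unfolding A_def uncovered_by_constant_runs_def using l_pos[of i] by auto
      moreover have "l i \<le> l n" using i l_mono by (simp add: monoD)
      ultimately show "i \<in> nonconstant_windows y (l n) \<inter> {..<n}"
        using i nonconstant_windows_mono by blast
    qed
    then have "card (A \<inter> {..<n}) \<le> card (nonconstant_windows y (l n) \<inter> {..<n})"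
      by (intro card_mono) auto
    then have "l n * card (A \<inter> {..<n}) \<le> n"
      by (rule order.trans[OF mult_le_mono2 l_card])
    then have "real (l n) * real (card (A \<inter> {..<n})) \<le> real n" by (simp flip: of_nat_mult)
    then show "norm (real (card (A \<inter> {..<n})) / real n) \<le> 1 * (1 / real (l n))"
      using l_pos[of n] by (cases "n = 0") (simp_all add: field_simps)
  qed
  moreover have "(\<lambda>n. 1 * (1 / real (l n))) \<longlonglongrightarrow> 0"
    using tendsto_inverse_0_at_top[OF filterlim_compose[OF filterlim_real_sequentially l_lim]]
    by (simp add: inverse_eq_divide)
  ultimately show ?thesis
    unfolding density_zero_def A_def by (rule Lim_null_comparison[OF always_eventually])
qed

lemma long_interval_cover_constant_runs:
  assumes l_le: "\<And>n. l n \<le> max 1 n" and l_lim: "filterlim l at_top sequentially"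
  shows "long_interval_cover (- uncovered_by_constant_runs y l \<inter> {i. y i = v})"
  unfolding long_interval_cover_def
proof
  fix M
  define A where "A = uncovered_by_constant_runs y l"
  obtain J where J: "\<And>j. J \<le> j \<Longrightarrow> M \<le> l j"
    using l_lim unfolding filterlim_at_top eventually_sequentially by blast
  have "\<exists>a b. a \<le> x \<and> x < b \<and> {a..<b} \<subseteq> - A \<inter> {i. y i = v} \<and> M \<le> b - a"
    if x: "x \<in> - A \<inter> {i. y i = v}" "2 * J + 1 \<le> x" for x
  proof -
    obtain j where j: "j \<le> x" "x < j + l j" "j \<notin> nonconstant_windows y (l j)"
      using x unfolding A_def uncovered_by_constant_runs_def by auto
    have const: "y z = y j" if "j \<le> z" "z < j + l j" for z
    proof -
      have "z - j < l j" using that by simp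
      then have "y (j + (z - j)) = y j" using j(3) unfolding nonconstant_windows_def by blast
      then show ?thesis using that by simp
    qed
    have "J \<le> j" using l_le[of j] j(2) x(2) by (simp add: max_def split: if_splits)
    moreover have "{j..<j + l j} \<subseteq> - A \<inter> {i. y i = v}"
    proof
      fix z
      assume z: "z \<in> {j..<j + l j}"
      then have "z \<notin> A" unfolding A_def uncovered_by_constant_runs_def using j(3) by auto
      moreover have "y z = v" using const[of z] const[of x] z j x by auto
      ultimately show "z \<in> - A \<inter> {i. y i = v}" by simp
    qed
    ultimately have "j \<le> x \<and> x < j + l j \<and> {j..<j + l j} \<subseteq> - A \<inter> {i. y i = v} \<and> M \<le> (j + l j) - j"
      using j J by simp
    then show ?thesis by blast
  qed
  then show "\<exists>N. \<forall>x\<in>- A \<inter> {i. y i = v}. N \<le> x \<longrightarrow>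
      (\<exists>a b. a \<le> x \<and> x < b \<and> {a..<b} \<subseteq> - A \<inter> {i. y i = v} \<and> M \<le> b - a)"
    by blast
qed

lemma exists_long_constant_runs:
  fixes y :: "nat \<Rightarrow> 'a"
  assumes "\<And>L. density_zero (nonconstant_windows y L)"
  obtains A where "density_zero A" "\<And>v. long_interval_cover (- A \<inter> {i. y i = v})"
proof -
  obtain l where l: "mono l" "\<And>n. 1 \<le> l n" "\<And>n. l n \<le> max 1 n" "filterlim l at_top sequentially"
    "\<And>n. l n * card (nonconstant_windows y (l n) \<inter> {..<n}) \<le> n"
    using exists_slow_window_length[of "nonconstant_windows y", OF assms] by blast
  show ?thesis
  proof (rule that)
    show "density_zero (uncovered_by_constant_runs y l)"
      by (rule density_zero_uncovered_by_constant_runs[OF l(1,2,4,5)])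
    show "long_interval_cover (- uncovered_by_constant_runs y l \<inter> {i. y i = v})" for v
      by (rule long_interval_cover_constant_runs[OF l(3,4)])
  qed
qed

lemma card_le_if_spaced:
  fixes X :: "nat set"
  assumes M: "M \<ge> 1" and spaced: "\<And>e e'. e \<in> X \<Longrightarrow> e' \<in> X \<Longrightarrow> e < e' \<Longrightarrow> e + M \<le> e'"
  shows "M * card (X \<inter> {..<n}) \<le> n + M"
proof (induction n rule: less_induct)
  case (less n)
  show ?case
  proof (cases n)
    case (Suc m)
    show ?thesis
    proof (cases "m \<in> X")
      case False
      then have "X \<inter> {..<n} = X \<inter> {..<m}" using Suc by (auto simp: less_Suc_eq)
      then show ?thesis using less.IH[of m] Suc by simp
    next
      case True
      have "X \<inter> {..<n} \<subseteq> insert m (X \<inter> {..<n - M})"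
      proof
        fix e
        assume e: "e \<in> X \<inter> {..<n}"
        show "e \<in> insert m (X \<inter> {..<n - M})"
        proof (cases "e = m")
          case False
          then have "e + M \<le> m" using spaced[of e m] e True Suc by auto
          then show ?thesis using e Suc by auto
        qed simp
      qed
      then have "card (X \<inter> {..<n}) \<le> card (insert m (X \<inter> {..<n - M}))" by (rule card_mono[rotated]) simp
      also have "\<dots> \<le> Suc (card (X \<inter> {..<n - M}))" by (rule card_insert_le_m1) auto
      finally have "M * card (X \<inter> {..<n}) \<le> M * Suc (card (X \<inter> {..<n - M}))"
        by (rule mult_le_mono2)
      moreover have "M * card (X \<inter> {..<n - M}) \<le> n"
      proof (cases "M \<le> n")
        case True
        then show ?thesis using less.IH[of "n - M"] M Suc by simp
      qed simp
      ultimately show ?thesis by simp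
    qed
  qed simp
qed

text \<open>An interval of length at least \<open>M\<close> in \<open>V\<close> that contains \<open>Suc e\<close> but not \<open>e\<close> starts at
  \<open>Suc e\<close>, so no further exit from \<open>V\<close> occurs within distance \<open>M\<close>.\<close>

lemma interval_after_entry:
  assumes cover: "\<forall>x\<in>V. N \<le> x \<longrightarrow> (\<exists>a b. a \<le> x \<and> x < b \<and> {a..<b} \<subseteq> V \<and> M \<le> b - a)"
    and e: "e \<notin> V" "Suc e \<in> V" "N \<le> Suc e" and e': "e < e'" "e' < e + M"
  shows "e' \<in> V \<and> Suc e' \<in> V"
proof -
  obtain a b where ab: "a \<le> Suc e" "Suc e < b" "{a..<b} \<subseteq> V" "M \<le> b - a"
    using cover e by blast
  have "\<not> a \<le> e"
  proof
    assume "a \<le> e"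
    then have "e \<in> V" using ab(2,3) by auto
    with e(1) show False by blast
  qed
  then have "a = Suc e" using ab by simp
  then have "e' \<in> {a..<b}" "Suc e' \<in> {a..<b}" using ab e' by auto
  then show ?thesis using ab by auto
qed

definition boundary_points :: "nat set \<Rightarrow> nat set \<Rightarrow> nat set" where
  "boundary_points B C = {j. (j \<in> B \<and> Suc j \<in> C) \<or> (j \<in> C \<and> Suc j \<in> B)}"

lemma boundary_points_spaced:
  assumes disj: "B \<inter> C = {}" and cover: "long_interval_cover B" "long_interval_cover C"
  obtains N where "\<And>e e'. e \<in> boundary_points B C \<Longrightarrow> e' \<in> boundary_points B C \<Longrightarrow> N \<le> e \<Longrightarrow>
    e < e' \<Longrightarrow> e + M \<le> e'"
proof -
  obtain NB where NB: "\<forall>x\<in>B. NB \<le> x \<longrightarrow> (\<exists>a b. a \<le> x \<and> x < b \<and> {a..<b} \<subseteq> B \<and> M \<le> b - a)"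
    using cover(1) unfolding long_interval_cover_def by blast
  obtain NC where NC: "\<forall>x\<in>C. NC \<le> x \<longrightarrow> (\<exists>a b. a \<le> x \<and> x < b \<and> {a..<b} \<subseteq> C \<and> M \<le> b - a)"
    using cover(2) unfolding long_interval_cover_def by blast
  have "e + M \<le> e'"
    if e: "e \<in> boundary_points B C" "e' \<in> boundary_points B C" "max NB NC \<le> e" "e < e'" for e e'
  proof (rule ccontr)
    assume "\<not> e + M \<le> e'"
    then have "e' < e + M" by simp
    from e(1) consider "e \<in> B" "Suc e \<in> C" | "e \<in> C" "Suc e \<in> B"
      unfolding boundary_points_def by auto
    then show False
    proof cases
      case 1
      then have "e' \<in> C \<and> Suc e' \<in> C"
        using interval_after_entry[OF NC _ _ _ e(4) \<open>e' < e + M\<close>] disj e(3) by auto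
      then show False using e(2) disj unfolding boundary_points_def by auto
    next
      case 2
      then have "e' \<in> B \<and> Suc e' \<in> B"
        using interval_after_entry[OF NB _ _ _ e(4) \<open>e' < e + M\<close>] disj e(3) by auto
      then show False using e(2) disj unfolding boundary_points_def by auto
    qed
  qed
  then show ?thesis using that by blast
qed

lemma density_zero_boundary_points:
  assumes "B \<inter> C = {}" "long_interval_cover B" "long_interval_cover C"
  shows "density_zero (boundary_points B C)"
proof (rule density_zeroI)
  define E where "E = boundary_points B C"
  fix \<epsilon> :: real
  assume "\<epsilon> > 0"
  define M :: nat where "M = nat \<lceil>2 / \<epsilon>\<rceil> + 1"
  have "M \<ge> 1" unfolding M_def by simp
  have "real M > 2 / \<epsilon>" unfolding M_def by linarith
  then have M_small: "1 / real M < \<epsilon> / 2" using \<open>\<epsilon> > 0\<close> \<open>M \<ge> 1\<close> by (simp add: field_simps)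
  obtain N where spaced: "\<And>e e'. e \<in> E \<Longrightarrow> e' \<in> E \<Longrightarrow> N \<le> e \<Longrightarrow> e < e' \<Longrightarrow> e + M \<le> e'"
    unfolding E_def using boundary_points_spaced[OF assms] by blast
  define X where "X = E \<inter> {N..}"
  have card_X: "M * card (X \<inter> {..<n}) \<le> n + M" for n
    by (rule card_le_if_spaced[OF \<open>M \<ge> 1\<close>]) (auto simp: X_def intro!: spaced)
  have card_E: "card (E \<inter> {..<n}) \<le> card (X \<inter> {..<n}) + N" for n
  proof -
    have "card (E \<inter> {..<n}) \<le> card ((X \<inter> {..<n}) \<union> {..<N})"
      by (rule card_mono) (auto simp: X_def)
    also have "\<dots> \<le> card (X \<inter> {..<n}) + card {..<N}" by (rule card_Un_le)
    finally show ?thesis by simp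
  qed
  have bound: "real (card (E \<inter> {..<n})) / real n \<le> 1 / real M + real (N + 1) / real n"
    if "n > 0" for n
  proof -
    have "real M * real (card (E \<inter> {..<n})) \<le> real M * (real (card (X \<inter> {..<n})) + real N)"
      using card_E[of n] by (intro mult_left_mono) auto
    also have "\<dots> \<le> real n + real M + real M * real N"
      using card_X[of n] by (simp add: distrib_left flip: of_nat_mult of_nat_add)
    finally have "real M * real (card (E \<inter> {..<n})) \<le> real n + real M * real (N + 1)"
      by (simp add: distrib_left)
    then show ?thesis using that \<open>M \<ge> 1\<close> by (simp add: field_simps)
  qed
  have "(\<lambda>n. real (N + 1) * (1 / real n)) \<longlonglongrightarrow> real (N + 1) * 0"
    by (intro tendsto_mult tendsto_const lim_1_over_n)
  then have "(\<lambda>n. real (N + 1) / real n) \<longlonglongrightarrow> 0" by simp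
  then have "\<forall>\<^sub>F n in sequentially. real (N + 1) / real n < \<epsilon> / 2"
    by (rule order_tendstoD(2)) (use \<open>\<epsilon> > 0\<close> in simp)
  then show "\<forall>\<^sub>F n in sequentially. real (card (boundary_points B C \<inter> {..<n})) / real n < \<epsilon>"
    using eventually_gt_at_top[of 0]
  proof eventually_elim
    case (elim n)
    then show ?case using bound[of n] M_small unfolding E_def by linarith
  qed
qed

lemma exists_first_change:
  fixes y :: "nat \<Rightarrow> 'a"
  shows "y (i + t) \<noteq> y i \<Longrightarrow> \<exists>s<t. y (i + s) \<noteq> y (i + Suc s)"
proof (induction t)
  case (Suc t)
  show ?case
  proof (cases "y (i + t) = y i")
    case True
    then have "y (i + t) \<noteq> y (i + Suc t)" using Suc.prems by simp
    then show ?thesis by blast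
  next
    case False
    then obtain s where "s < t" "y (i + s) \<noteq> y (i + Suc s)" using Suc.IH by blast
    then show ?thesis by (intro exI[of _ s]) simp
  qed
qed simp

text \<open>A window on which \<open>1\<^sub>S\<close> is not constant meets \<open>A\<close> or a boundary point.\<close>

lemma density_zero_windows_if_partition:
  assumes part: "A \<union> B \<union> C = UNIV" and disj: "B \<inter> C = {}" and "density_zero A"
    and cover: "long_interval_cover B" "long_interval_cover C" and "B \<subseteq> S" "C \<inter> S = {}"
  shows "density_zero (nonconstant_windows (ind_seq S) L)"
proof -
  define D where "D = A \<union> boundary_points B C"
  have "density_zero D"
    unfolding D_def by (rule density_zero_Un[OF \<open>density_zero A\<close> density_zero_boundary_points[OF disj cover]])
  then have near: "density_zero {i. \<exists>t<L. i + t \<in> D}" by (rule density_zero_near)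
  have "nonconstant_windows (ind_seq S) L \<subseteq> {i. \<exists>t<L. i + t \<in> D}"
  proof
    fix i
    assume "i \<in> nonconstant_windows (ind_seq S) L"
    then obtain t where t: "t < L" "i + t \<in> S \<longleftrightarrow> i \<notin> S"
      unfolding nonconstant_windows_def ind_seq_def by auto
    then obtain s where s: "s < t" "i + s \<in> S \<longleftrightarrow> i + Suc s \<notin> S"
      using exists_first_change[of "\<lambda>j. j \<in> S" i t] by auto
    then have "i + s \<in> D \<or> i + Suc s \<in> D"
      using part disj \<open>B \<subseteq> S\<close> \<open>C \<inter> S = {}\<close> unfolding D_def boundary_points_def by auto
    then show "i \<in> {i. \<exists>t<L. i + t \<in> D}"
      using s t by (metis (mono_tags, lifting) Suc_lessI add_Suc_right less_trans mem_Collect_eq)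
  qed
  then show ?thesis using near by (rule density_zero_subset)
qed

lemma partition_if_density_zero_windows:
  assumes "\<And>L. density_zero (nonconstant_windows (ind_seq S) L)"
  shows "\<exists>A B C. A \<union> B \<union> C = UNIV \<and> A \<inter> B = {} \<and> A \<inter> C = {} \<and> B \<inter> C = {} \<and>
    density_zero A \<and> (B = {} \<or> union_long_intervals B) \<and> B \<subseteq> S \<and>
    (C = {} \<or> union_long_intervals C) \<and> C \<inter> S = {}"
proof -
  obtain A0 where "density_zero A0" and runs: "\<And>v. long_interval_cover (- A0 \<inter> {i. ind_seq S i = v})"
    using exists_long_constant_runs[OF assms] by blast
  have "long_interval_cover (- A0 \<inter> S)" "long_interval_cover (- A0 - S)"
    using runs[of True] runs[of False] by (simp_all add: ind_seq_def Diff_eq Collect_neg_eq)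
  then obtain B C where B: "B \<subseteq> - A0 \<inter> S" "finite (- A0 \<inter> S - B)" "B = {} \<or> union_long_intervals B"
    and C: "C \<subseteq> - A0 - S" "finite (- A0 - S - C)" "C = {} \<or> union_long_intervals C"
    by (metis infinite_part_of_cover)
  define A where "A = A0 \<union> (- A0 \<inter> S - B) \<union> (- A0 - S - C)"
  have "density_zero A"
    unfolding A_def by (intro density_zero_Un \<open>density_zero A0\<close> density_zero_finite B(2) C(2))
  moreover have "A \<union> B \<union> C = UNIV \<and> A \<inter> B = {} \<and> A \<inter> C = {} \<and> B \<inter> C = {} \<and> B \<subseteq> S \<and> C \<inter> S = {}"
    unfolding A_def using B(1) C(1) by auto
  ultimately show ?thesis using B(3) C(3) by blast
qed

lemma density_zero_windows_iff_partition:
  "(\<forall>L. density_zero (nonconstant_windows (ind_seq S) L)) \<longleftrightarrow>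
    (\<exists>A B C. A \<union> B \<union> C = UNIV \<and> A \<inter> B = {} \<and> A \<inter> C = {} \<and> B \<inter> C = {} \<and>
       density_zero A \<and> (B = {} \<or> union_long_intervals B) \<and> B \<subseteq> S \<and>
       (C = {} \<or> union_long_intervals C) \<and> C \<inter> S = {})"
proof
  assume "\<forall>L. density_zero (nonconstant_windows (ind_seq S) L)"
  then show "\<exists>A B C. A \<union> B \<union> C = UNIV \<and> A \<inter> B = {} \<and> A \<inter> C = {} \<and> B \<inter> C = {} \<and>
       density_zero A \<and> (B = {} \<or> union_long_intervals B) \<and> B \<subseteq> S \<and>
       (C = {} \<or> union_long_intervals C) \<and> C \<inter> S = {}"
    by (intro partition_if_density_zero_windows) blast
next
  assume "\<exists>A B C. A \<union> B \<union> C = UNIV \<and> A \<inter> B = {} \<and> A \<inter> C = {} \<and> B \<inter> C = {} \<and>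
       density_zero A \<and> (B = {} \<or> union_long_intervals B) \<and> B \<subseteq> S \<and>
       (C = {} \<or> union_long_intervals C) \<and> C \<inter> S = {}"
  then obtain A B C where part: "A \<union> B \<union> C = UNIV" "B \<inter> C = {}" "density_zero A"
    and B: "B = {} \<or> union_long_intervals B" "B \<subseteq> S"
    and C: "C = {} \<or> union_long_intervals C" "C \<inter> S = {}"
    by blast
  have "long_interval_cover B" "long_interval_cover C"
    using B(1) C(1) cover_if_union_long_intervals long_interval_cover_empty by blast+
  then show "\<forall>L. density_zero (nonconstant_windows (ind_seq S) L)"
    using density_zero_windows_if_partition[OF part] B(2) C(2) by blast
qed

theorem mainTheorem1:
  fixes S :: "nat set"
  assumes "infinite S"
  shows "superficial S \<longleftrightarrow>
    (\<exists>A B C :: nat set.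
       A \<union> B \<union> C = UNIV \<and> A \<inter> B = {} \<and> A \<inter> C = {} \<and> B \<inter> C = {} \<and>
       density_zero A \<and>
       (B = {} \<or> union_long_intervals B) \<and> B \<subseteq> S \<and>
       (C = {} \<or> union_long_intervals C) \<and> C \<inter> S = {})"
  using superficial_iff_density_zero_windows[OF assms] density_zero_windows_iff_partition
  by simp

end
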